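(* Let $q$ be a prime power, $\ell\geq 1$, and let $\mathcal{A}$ be a central hyperplane arrangement in $\mathbb{F}_q^\ell$. The following are equivalent: (a) $\mathcal{A}=\mathcal{A}_{all}(\mathbb{F}_q^\ell)$; (b) $|\mathcal{A}|=\frac{q^\ell-1}{q-1}$; (c) $\chi(\mathcal{A},t)=(t-1)(t-q)\cdots(t-q^{\ell-1})$; (d) $\chi(\mathcal{A},q^{\ell-1})=0$.
   Context: A (central) hyperplane arrangement $\mathcal{A}$ in a vector space $V$ over a field $\mathbb{K}$ is a finite set of linear subspaces of codimension one. $\mathcal{A}_{all}(V)$ denotes the arrangement consisting of all hyperplanes (codimension-one linear subspaces) of $V$ when $V$ is a vector space over a finite field. $L(\mathcal{A})$ denotes the set of all intersections of subsets of $\mathcal{A}$ (including $V$ itself), ordered by reverse inclusion, with minimal element $\hat 0=V$. The Möbius function $\mu$ on $L(\mathcal{A})$ is defined by $\mu(\hat0)=1$ and $\mu(X)=-\sum_{Y<X}\mu(Y)$ for $X>\hat0$. The characteristic polynomial is $\chi(\mathcal{A},t)=\sum_{X\in L(\mathcal{A})}\mu(X)t^{\dim X}$. *)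

theory Defs
  imports "HOL-Analysis.Analysis" "HOL-Computational_Algebra.Polynomial"
begin

(* The ambient space is  'a^'n  with 'a a finite field (so q = CARD('a) is a prime power)
   and  ell = CARD('n). *)

definition hyperplane :: "('a::field ^ 'n) set \<Rightarrow> bool" where
  "hyperplane H \<longleftrightarrow> vec.subspace H \<and> vec.dim H = CARD('n) - 1"

definition arrangement :: "('a::field ^ 'n) set set \<Rightarrow> bool" where
  "arrangement A \<longleftrightarrow> finite A \<and> (\<forall>H\<in>A. hyperplane H)"

definition A_all :: "('a::field ^ 'n) set set" where
  "A_all = {H. hyperplane H}"

(* intersection lattice: intersections of subsets of A; the empty intersection is V = UNIV *)
definition intersection_lattice :: "'v set set \<Rightarrow> 'v set set" where
  "intersection_lattice A = {\<Inter> B | B. B \<subseteq> A}"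

(* Moebius function of L ordered by reverse inclusion, with bottom element UNIV:
   mu(UNIV) = 1, mu(X) = - sum_{Y in L, Y < X} mu(Y), where Y < X means X \<subset> Y. *)
function mobius :: "('v::finite) set set \<Rightarrow> 'v set \<Rightarrow> int" where
  "mobius L X = (if X = UNIV then 1 else - (\<Sum>Y\<in>{Y\<in>L. X \<subset> Y}. mobius L Y))"
  by auto
termination
proof (relation "Wellfounded.measure (\<lambda>(L, X). card (UNIV - X))")
  fix L :: "'v::finite set set" and X Y :: "'v set"
  assume "X \<noteq> UNIV" "Y \<in> {Y \<in> L. X \<subset> Y}"
  then have "UNIV - Y \<subset> UNIV - X" by auto
  then show "((L, Y), (L, X)) \<in> Wellfounded.measure (\<lambda>(L, X). card (UNIV - X))"
    using psubset_card_mono[OF finite, of "UNIV - Y" "UNIV - X"] by simp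
qed auto

definition char_poly :: "('a::{finite,field} ^ 'n) set set \<Rightarrow> int poly" where
  "char_poly A = (\<Sum>X\<in>intersection_lattice A.
      monom (mobius (intersection_lattice A) X) (vec.dim X))"

end

theory Submission
  imports Defs
begin

(* Write V = F_q^l. For any family A of proper subspaces of V, chi(A, q^m) is the number of
   m-tuples of vectors of V not all contained in one member of A (the finite field method): the
   tuples inside a flat X are those whose generated flat lies below X, there are q^(m dim X) of
   them, and summing the Moebius function over the flats above a given flat Y gives [Y = V].
   For A_all these are the spanning m-tuples; the rows of the l x m matrix of such a tuple are l
   independent vectors of F_q^m, so there are (q^m - 1)(q^m - q)...(q^m - q^(l-1)) of them. As
   this holds for every m, chi(A_all, t) = (t - 1)(t - q)...(t - q^(l-1)), which gives (a) => (c),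
   and (c) => (d) is immediate. If a hyperplane H is missing from A, a basis of H is an
   (l-1)-tuple contained in no member of A, so chi(A, q^(l-1)) > 0: this is (d) => (a).
   Finally the hyperplanes are exactly the flats of dimension l-1, each with Moebius value -1,
   so the coefficient of t^(l-1) in chi(A, t) is -|A|; comparing with the product formula gives
   |A_all| = 1 + q + ... + q^(l-1), whence (a) <=> (b).
*)

lemma poly_eqI_infinite:
  fixes p q :: "'a::idom poly"
  assumes "infinite S" "\<And>x. x \<in> S \<Longrightarrow> poly p x = poly q x"
  shows "p = q"
proof (rule ccontr)
  assume "p \<noteq> q"
  then have "finite {x. poly (p - q) x = 0}" by (intro poly_roots_finite) simp
  moreover have "S \<subseteq> {x. poly (p - q) x = 0}" using assms(2) by auto
  ultimately show False using assms(1) finite_subset by blast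
qed

lemma coeff_prod_linear_factors:
  fixes c :: "nat \<Rightarrow> 'a::idom"
  shows "coeff (\<Prod>i<Suc n. [:- c i, 1:]) n = - (\<Sum>i<Suc n. c i)"
proof (induction n)
  case 0
  show ?case by simp
next
  case (Suc n)
  define P where "P = (\<Prod>i<Suc n. [:- c i, 1:])"
  have "degree P = Suc n" unfolding P_def by (subst degree_prod_sum_eq) auto
  moreover have "lead_coeff P = 1" unfolding P_def lead_coeff_prod by simp
  ultimately have "coeff P (Suc n) = 1" by simp
  then have "coeff (P * [:- c (Suc n), 1:]) (Suc n) = coeff P n - c (Suc n)" by simp
  then show ?case using Suc.IH by (simp add: P_def)
qed

lemma poly_prod_linear_factors_root:
  fixes c :: "nat \<Rightarrow> 'a::idom"
  assumes "k < n"
  shows "poly (\<Prod>i<n. [:- c i, 1:]) (c k) = 0"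
  using assms by (auto simp: poly_prod prod_zero_iff)

section \<open>Subspaces, hyperplanes and annihilators\<close>

lemma card_field_ge_2: "2 \<le> CARD('a::{finite,field})"
proof -
  have "card {0, 1 :: 'a} \<le> CARD('a)" by (rule card_mono) simp_all
  then show ?thesis by simp
qed

lemma (in finite_dimensional_vector_space) card_subspace:
  assumes "finite (UNIV :: 'a set)" and "subspace X"
  shows "card X = CARD('a) ^ dim X"
proof -
  obtain B where B: "B \<subseteq> X" "independent B" "X \<subseteq> span B" "card B = dim X"
    using basis_exists by blast
  have "finite B" using B(2) by (rule finiteI_independent)
  define f where "f c = (\<Sum>v\<in>B. scale (c v) v)" for c
  have inj: "inj_on f (B \<rightarrow>\<^sub>E UNIV)"
  proof (rule inj_onI)
    fix c d assume c: "c \<in> B \<rightarrow>\<^sub>E UNIV" and d: "d \<in> B \<rightarrow>\<^sub>E UNIV" and "f c = f d"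
    then have "(\<Sum>v\<in>B. scale (c v - d v) v) = 0"
      by (simp only: f_def scale_left_diff_distrib sum_subtractf diff_self)
    then have "\<forall>v\<in>B. c v - d v = 0"
      using B(2) unfolding independent_explicit by (elim conjE allE[of _ "\<lambda>v. c v - d v"]) simp
    then show "c = d" using c d by (intro PiE_ext) auto
  qed
  moreover have image: "f ` (B \<rightarrow>\<^sub>E UNIV) = X"
  proof -
    have "range f \<subseteq> f ` (B \<rightarrow>\<^sub>E UNIV)"
    proof
      fix y assume "y \<in> range f"
      then obtain u where "y = f u" by blast
      then have "y = f (restrict u B)" by (simp add: f_def)
      then show "y \<in> f ` (B \<rightarrow>\<^sub>E UNIV)" by (intro image_eqI[of y f "restrict u B"]) simp_all
    qed
    then have "f ` (B \<rightarrow>\<^sub>E UNIV) = range f" by (simp add: image_subset_iff subset_antisym)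
    also have "\<dots> = span B" unfolding f_def by (rule span_finite[OF \<open>finite B\<close>, symmetric])
    also have "\<dots> = X" using B assms(2) span_subspace by blast
    finally show ?thesis .
  qed
  ultimately have "card X = card (B \<rightarrow>\<^sub>E (UNIV :: 'a set))" using card_image[OF inj] image by simp
  also have "\<dots> = CARD('a) ^ dim X" using \<open>finite B\<close> B(4) by (simp add: card_PiE)
  finally show ?thesis .
qed

lemma ne_UNIV_if_dim_less:
  fixes X :: "('a::field ^ 'n) set"
  shows "vec.dim X < CARD('n) \<Longrightarrow> X \<noteq> UNIV"
  using vec_dim_card[where 'a = 'a and 'n = 'n] by auto

lemma hyperplane_ne_UNIV:
  fixes H :: "('a::field ^ 'n) set"
  shows "hyperplane H \<Longrightarrow> H \<noteq> UNIV"
  by (rule ne_UNIV_if_dim_less) (simp add: hyperplane_def)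

lemma subspace_eq_UNIV_if_psupset_hyperplane:
  fixes H Y :: "('a::field ^ 'n) set"
  assumes "hyperplane H" "vec.subspace Y" "H \<subset> Y"
  shows "Y = UNIV"
proof -
  have spans: "vec.span H = H" "vec.span Y = Y"
    using assms(1,2) by (simp_all add: hyperplane_def vec.span_eq_iff)
  have "vec.dim H < vec.dim Y" using vec.dim_psubset[of H Y] assms(3) unfolding spans by simp
  then have "vec.dim Y = CARD('n)"
    using assms(1) dim_subset_UNIV_cart_gen[of Y] by (simp add: hyperplane_def)
  then show ?thesis
    using vec.subspace_dim_equal[of Y UNIV] assms(2) vec_dim_card[where 'a = 'a and 'n = 'n] by simp
qed

lemma basis_through_vector_outside_subspace:
  fixes W :: "('a::field ^ 'n) set"
  assumes "vec.subspace W" "v \<notin> W"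
  obtains C where "vec.independent C" "vec.span C = UNIV" "v \<in> C" "W \<subseteq> vec.span (C - {v})"
proof -
  obtain B where B: "B \<subseteq> W" "vec.independent B" "W \<subseteq> vec.span B"
    by (rule vec.maximal_independent_subset)
  have "vec.span B = W" by (rule vec.span_subspace[OF B(1,3) assms(1)])
  then have "vec.independent (insert v B)"
    using vec.independent_insertI[OF _ B(2)] assms(2) by simp
  then obtain C where C: "insert v B \<subseteq> C" "vec.independent C" "UNIV \<subseteq> vec.span C"
    using vec.maximal_independent_subset_extend[OF subset_UNIV] by metis
  have "B \<subseteq> C - {v}" using B(1) C(1) assms(2) by auto
  then have "W \<subseteq> vec.span (C - {v})" using B(3) vec.span_mono[of B "C - {v}"] by auto
  then show ?thesis using C by (intro that) auto
qed

lemma proper_subspace_subset_hyperplane: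
  fixes W :: "('a::field ^ 'n) set"
  assumes "vec.subspace W" "W \<noteq> UNIV"
  obtains H where "hyperplane H" "W \<subseteq> H"
proof -
  obtain v where "v \<notin> W" using assms(2) by blast
  then obtain C where C: "vec.independent C" "vec.span C = UNIV" "v \<in> C"
      and W: "W \<subseteq> vec.span (C - {v})"
    using basis_through_vector_outside_subspace[OF assms(1)] by blast
  have "finite C" using C(1) vec.finiteI_independent by blast
  have "card C = CARD('n)"
    using vec.dim_span_eq_card_independent[OF C(1)] C(2) by (simp add: card_cart_basis)
  moreover have "vec.independent (C - {v})" using C(1) vec.independent_mono by blast
  ultimately have "vec.dim (vec.span (C - {v})) = CARD('n) - 1"
    using vec.dim_span_eq_card_independent[of "C - {v}"] \<open>finite C\<close> C(3) by simp
  then have "hyperplane (vec.span (C - {v}))" by (simp add: hyperplane_def)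
  with W that show ?thesis by blast
qed

lemma proper_subspace_annihilator:
  fixes W :: "('a::field ^ 'n) set"
  assumes "vec.subspace W" "W \<noteq> UNIV"
  shows "\<exists>\<alpha>. (\<exists>i. \<alpha> i \<noteq> 0) \<and> (\<forall>x\<in>W. (\<Sum>i\<in>UNIV. \<alpha> i * x $ i) = 0)"
proof -
  obtain v where "v \<notin> W" using assms(2) by blast
  then obtain C where C: "vec.independent C" "vec.span C = UNIV" "v \<in> C"
      and W: "W \<subseteq> vec.span (C - {v})"
    using basis_through_vector_outside_subspace[OF assms(1)] by blast
  define \<phi> where "\<phi> x = vec.representation C x v" for x
  define \<alpha> where "\<alpha> i = \<phi> (axis i 1)" for i
  have \<phi>_expansion: "\<phi> x = (\<Sum>i\<in>UNIV. \<alpha> i * x $ i)" for x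
  proof -
    have "\<phi> x = \<phi> (\<Sum>i\<in>UNIV. x $ i *s axis i 1)" by (simp only: basis_expansion)
    also have "\<dots> = (\<Sum>i\<in>UNIV. x $ i * \<phi> (axis i 1))"
      using C(1,2) by (simp add: \<phi>_def vec.representation_sum vec.representation_scale)
    finally show ?thesis by (simp add: \<alpha>_def mult.commute)
  qed
  have "\<phi> x = 0" if "x \<in> W" for x
  proof -
    have "x \<in> vec.span (C - {v})" using W that by blast
    then have "\<phi> x = vec.representation (C - {v}) x v"
      unfolding \<phi>_def using vec.representation_extend[OF C(1) _ Diff_subset] by simp
    then show ?thesis using vec.representation_ne_zero by fastforce
  qed
  moreover have "\<exists>i. \<alpha> i \<noteq> 0"
  proof (rule ccontr)
    assume "\<not> (\<exists>i. \<alpha> i \<noteq> 0)"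
    then have "\<phi> v = 0" by (simp add: \<phi>_expansion)
    moreover have "\<phi> v = 1" unfolding \<phi>_def using vec.representation_basis[OF C(1,3)] by simp
    ultimately show False by simp
  qed
  ultimately show ?thesis using \<phi>_expansion by auto
qed

lemma subspace_kernel_functional: "vec.subspace {x :: 'a::field ^ 'n. (\<Sum>i\<in>UNIV. \<alpha> i * x $ i) = 0}"
  by (auto simp: vec.subspace_def distrib_left sum.distrib sum_distrib_left[symmetric]
      mult.left_commute)

lemma span_eq_UNIV_iff_no_annihilator:
  fixes S :: "('a::field ^ 'n) set"
  shows "vec.span S = UNIV \<longleftrightarrow> (\<forall>\<alpha>. (\<exists>i. \<alpha> i \<noteq> 0) \<longrightarrow> (\<exists>x\<in>S. (\<Sum>i\<in>UNIV. \<alpha> i * x $ i) \<noteq> 0))"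
proof
  assume span: "vec.span S = UNIV"
  show "\<forall>\<alpha>. (\<exists>i. \<alpha> i \<noteq> 0) \<longrightarrow> (\<exists>x\<in>S. (\<Sum>i\<in>UNIV. \<alpha> i * x $ i) \<noteq> 0)"
  proof (intro allI impI, rule ccontr)
    fix \<alpha> :: "'n \<Rightarrow> 'a" assume "\<exists>i. \<alpha> i \<noteq> 0" and "\<not> (\<exists>x\<in>S. (\<Sum>i\<in>UNIV. \<alpha> i * x $ i) \<noteq> 0)"
    then obtain i where "\<alpha> i \<noteq> 0" "S \<subseteq> {x. (\<Sum>i\<in>UNIV. \<alpha> i * x $ i) = 0}" by blast
    then have "vec.span S \<subseteq> {x. (\<Sum>i\<in>UNIV. \<alpha> i * x $ i) = 0}"
      using vec.span_minimal[OF _ subspace_kernel_functional] by blast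
    then have "(\<Sum>j\<in>UNIV. \<alpha> j * axis i 1 $ j) = 0" unfolding span by blast
    then show False using \<open>\<alpha> i \<noteq> 0\<close> by (simp add: axis_def if_distrib sum.delta cong: if_cong)
  qed
next
  assume no_annihilator: "\<forall>\<alpha>. (\<exists>i. \<alpha> i \<noteq> 0) \<longrightarrow> (\<exists>x\<in>S. (\<Sum>i\<in>UNIV. \<alpha> i * x $ i) \<noteq> 0)"
  show "vec.span S = UNIV"
  proof (rule ccontr)
    assume "vec.span S \<noteq> UNIV"
    then obtain \<alpha> where "\<exists>i. \<alpha> i \<noteq> 0" and "\<forall>x\<in>vec.span S. (\<Sum>i\<in>UNIV. \<alpha> i * x $ i) = 0"
      using proper_subspace_annihilator[OF vec.subspace_span] by blast
    with no_annihilator show False using vec.span_base by blast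
  qed
qed

lemma span_eq_UNIV_iff_not_subset_hyperplane:
  fixes S :: "('a::field ^ 'n) set"
  shows "vec.span S = UNIV \<longleftrightarrow> (\<forall>H. hyperplane H \<longrightarrow> \<not> S \<subseteq> H)"
proof
  assume span: "vec.span S = UNIV"
  show "\<forall>H. hyperplane H \<longrightarrow> \<not> S \<subseteq> H"
  proof (intro allI impI notI)
    fix H assume H: "hyperplane H" "S \<subseteq> H"
    then have "vec.span S \<subseteq> H" by (intro vec.span_minimal) (simp_all add: hyperplane_def)
    with span hyperplane_ne_UNIV[OF H(1)] show False by blast
  qed
next
  assume no_hyperplane: "\<forall>H. hyperplane H \<longrightarrow> \<not> S \<subseteq> H"
  show "vec.span S = UNIV"
  proof (rule ccontr)
    assume "vec.span S \<noteq> UNIV"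
    then obtain H where "hyperplane H" "vec.span S \<subseteq> H"
      by (rule proper_subspace_subset_hyperplane[OF vec.subspace_span])
    with no_hyperplane vec.span_superset show False by blast
  qed
qed

section \<open>The finite field method\<close>

declare mobius.simps [simp del]

lemma mobius_UNIV [simp]: "mobius L UNIV = 1"
  by (subst mobius.simps) simp

lemma sum_mobius_above:
  fixes L :: "('v::finite) set set"
  assumes "Y \<in> L"
  shows "(\<Sum>X\<in>{X\<in>L. Y \<subseteq> X}. mobius L X) = (if Y = UNIV then 1 else 0)"
proof (cases "Y = UNIV")
  case True
  then have "{X\<in>L. Y \<subseteq> X} = {UNIV}" using assms by auto
  then show ?thesis using True by simp
next
  case False
  have "{X\<in>L. Y \<subseteq> X} = insert Y {X\<in>L. Y \<subset> X}" using assms by auto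
  moreover have "mobius L Y = - (\<Sum>X\<in>{X\<in>L. Y \<subset> X}. mobius L X)"
    using False by (subst mobius.simps) simp
  ultimately show ?thesis using False by simp
qed

lemma UNIV_mem_intersection_lattice: "UNIV \<in> intersection_lattice A"
  unfolding intersection_lattice_def by auto

lemma mem_intersection_lattice: "H \<in> A \<Longrightarrow> H \<in> intersection_lattice A"
  unfolding intersection_lattice_def by (intro CollectI exI[of _ "{H}"]) simp

lemma subspace_if_mem_intersection_lattice:
  "\<forall>H\<in>A. vec.subspace H \<Longrightarrow> X \<in> intersection_lattice A \<Longrightarrow> vec.subspace X"
  unfolding intersection_lattice_def by (auto intro!: vec.subspace_Inter)

definition uncovered_tuples :: "'v set set \<Rightarrow> nat \<Rightarrow> (nat \<Rightarrow> 'v) set" where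
  "uncovered_tuples A m = {r \<in> {..<m} \<rightarrow>\<^sub>E UNIV. \<forall>H\<in>A. \<exists>j<m. r j \<notin> H}"

lemma finite_uncovered_tuples: "finite (uncovered_tuples (A :: ('v::finite) set set) m)"
proof (rule finite_subset)
  show "uncovered_tuples A m \<subseteq> {..<m} \<rightarrow>\<^sub>E UNIV"
    unfolding uncovered_tuples_def by (rule Collect_restrict)
qed (simp add: finite_PiE)

lemma card_tuples_in_subspace:
  fixes X :: "('a::{finite,field} ^ 'n) set"
  assumes "vec.subspace X"
  shows "card {r \<in> {..<m} \<rightarrow>\<^sub>E UNIV. \<forall>j<m. r j \<in> X} = (CARD('a) ^ m) ^ vec.dim X"
proof -
  have "{r \<in> {..<m} \<rightarrow>\<^sub>E UNIV. \<forall>j<m. r j \<in> X} = {..<m} \<rightarrow>\<^sub>E X" by auto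
  then show ?thesis
    using vec.card_subspace[OF finite_class.finite_UNIV assms]
    by (simp add: card_PiE power_mult[symmetric] mult.commute)
qed

definition tuple_flat :: "'v set set \<Rightarrow> nat \<Rightarrow> (nat \<Rightarrow> 'v) \<Rightarrow> 'v set" where
  "tuple_flat A m r = \<Inter>{H\<in>A. \<forall>j<m. r j \<in> H}"

lemma tuple_flat_mem_intersection_lattice: "tuple_flat A m r \<in> intersection_lattice A"
  unfolding tuple_flat_def intersection_lattice_def
  by (intro CollectI exI[of _ "{H\<in>A. \<forall>j<m. r j \<in> H}"]) simp

lemma tuple_flat_subset_iff:
  assumes "X \<in> intersection_lattice A"
  shows "tuple_flat A m r \<subseteq> X \<longleftrightarrow> (\<forall>j<m. r j \<in> X)"
proof -
  obtain B where "B \<subseteq> A" "X = \<Inter>B" using assms unfolding intersection_lattice_def by auto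
  then show ?thesis unfolding tuple_flat_def by blast
qed

lemma tuple_flat_eq_UNIV_iff:
  "\<forall>H\<in>A. H \<noteq> UNIV \<Longrightarrow> tuple_flat A m r = UNIV \<longleftrightarrow> (\<forall>H\<in>A. \<exists>j<m. r j \<notin> H)"
  unfolding tuple_flat_def Inter_UNIV_conv by auto

lemma char_poly_finite_field_method:
  fixes A :: "('a::{finite,field} ^ 'n) set set"
  assumes subspace: "\<forall>H\<in>A. vec.subspace H" and proper: "\<forall>H\<in>A. H \<noteq> UNIV"
  shows "poly (char_poly A) (int CARD('a) ^ m) = int (card (uncovered_tuples A m))"
proof -
  let ?L = "intersection_lattice A"
  define R where "R = {..<m} \<rightarrow>\<^sub>E (UNIV :: ('a ^ 'n) set)"
  let ?flat = "tuple_flat A m"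
  have count: "(\<Sum>r\<in>R. if P r then 1 else 0) = int (card {r\<in>R. P r})" for P
    using finite_PiE[of "{..<m}" "\<lambda>_. UNIV :: ('a ^ 'n) set"]
    by (simp add: R_def sum.inter_filter[symmetric])
  have "poly (char_poly A) (int CARD('a) ^ m) =
      (\<Sum>X\<in>?L. mobius ?L X * (int CARD('a) ^ m) ^ vec.dim X)"
    unfolding char_poly_def by (simp add: poly_sum poly_monom)
  also have "\<dots> = (\<Sum>X\<in>?L. mobius ?L X * (\<Sum>r\<in>R. if ?flat r \<subseteq> X then 1 else 0))"
  proof (intro sum.cong refl arg_cong2[where f = times])
    fix X assume X: "X \<in> ?L"
    then have "vec.subspace X"
      using subspace_if_mem_intersection_lattice[OF subspace] by blast
    note card_tuples_in_subspace[OF this, of m]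
    moreover have "{r\<in>R. ?flat r \<subseteq> X} = {r \<in> {..<m} \<rightarrow>\<^sub>E UNIV. \<forall>j<m. r j \<in> X}"
      using tuple_flat_subset_iff X unfolding R_def by blast
    ultimately show "(int CARD('a) ^ m) ^ vec.dim X = (\<Sum>r\<in>R. if ?flat r \<subseteq> X then 1 else 0)"
      unfolding count by simp
  qed
  also have "\<dots> = (\<Sum>r\<in>R. \<Sum>X\<in>?L. if ?flat r \<subseteq> X then mobius ?L X else 0)"
    by (simp add: sum_distrib_left sum.swap[of _ ?L] if_distrib cong: if_cong)
  also have "\<dots> = (\<Sum>r\<in>R. if ?flat r = UNIV then 1 else 0)"
  proof (intro sum.cong refl)
    fix r
    show "(\<Sum>X\<in>?L. if ?flat r \<subseteq> X then mobius ?L X else 0) = (if ?flat r = UNIV then 1 else 0)"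
      using sum_mobius_above[OF tuple_flat_mem_intersection_lattice[of A m r]]
      by (simp add: sum.inter_filter)
  qed
  also have "\<dots> = int (card (uncovered_tuples A m))"
    unfolding tuple_flat_eq_UNIV_iff[OF proper] count unfolding uncovered_tuples_def R_def ..
  finally show ?thesis .
qed

lemma poly_char_poly_arrangement:
  fixes A :: "('a::{finite,field} ^ 'n) set set"
  assumes "arrangement A"
  shows "poly (char_poly A) (int CARD('a) ^ m) = int (card (uncovered_tuples A m))"
  using assms hyperplane_ne_UNIV
  by (intro char_poly_finite_field_method) (auto simp: arrangement_def hyperplane_def)

section \<open>Hyperplanes as the flats of codimension one\<close>

lemma codim_one_flats_eq_arrangement:
  fixes A :: "('a::field ^ 'n) set set"
  assumes "arrangement A"
  shows "{X \<in> intersection_lattice A. vec.dim X = CARD('n) - 1} = A"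
proof (intro equalityI subsetI)
  fix X assume "X \<in> {X \<in> intersection_lattice A. vec.dim X = CARD('n) - 1}"
  then have X: "X \<in> intersection_lattice A" "vec.dim X = CARD('n) - 1" by simp_all
  then obtain B where B: "B \<subseteq> A" "X = \<Inter>B" unfolding intersection_lattice_def by auto
  have "X \<noteq> UNIV" using X(2) by (intro ne_UNIV_if_dim_less) simp
  then obtain H where H: "H \<in> B" using B(2) by blast
  then have "hyperplane H" "X \<subseteq> H" using B assms unfolding arrangement_def by auto
  moreover have "vec.subspace X"
    using X(1) assms subspace_if_mem_intersection_lattice
    unfolding arrangement_def hyperplane_def by blast
  ultimately have "X = H" using X(2) vec.subspace_dim_equal[of X H] by (simp add: hyperplane_def)
  then show "X \<in> A" using H B(1) by blast
next
  fix H assume "H \<in> A"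
  then show "H \<in> {X \<in> intersection_lattice A. vec.dim X = CARD('n) - 1}"
    using assms mem_intersection_lattice unfolding arrangement_def hyperplane_def by blast
qed

lemma mobius_hyperplane:
  fixes A :: "('a::{finite,field} ^ 'n) set set"
  assumes "arrangement A" "H \<in> A"
  shows "mobius (intersection_lattice A) H = -1"
proof -
  have H: "hyperplane H" using assms unfolding arrangement_def by blast
  have "{Y \<in> intersection_lattice A. H \<subset> Y} = {UNIV}"
  proof (intro equalityI subsetI)
    fix Y assume "Y \<in> {Y \<in> intersection_lattice A. H \<subset> Y}"
    moreover have "\<forall>H\<in>A. vec.subspace H"
      using assms(1) unfolding arrangement_def hyperplane_def by blast
    ultimately show "Y \<in> {UNIV}"
      using subspace_eq_UNIV_if_psupset_hyperplane[OF H] subspace_if_mem_intersection_lattice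
      by blast
  qed (use hyperplane_ne_UNIV[OF H] UNIV_mem_intersection_lattice in auto)
  then show ?thesis using hyperplane_ne_UNIV[OF H] by (subst mobius.simps) simp
qed

lemma coeff_char_poly_codim_one:
  fixes A :: "('a::{finite,field} ^ 'n) set set"
  assumes "arrangement A"
  shows "coeff (char_poly A) (CARD('n) - 1) = - int (card A)"
proof -
  let ?L = "intersection_lattice A"
  have "coeff (char_poly A) (CARD('n) - 1) =
      (\<Sum>X\<in>?L. if vec.dim X = CARD('n) - 1 then mobius ?L X else 0)"
    unfolding char_poly_def by (simp add: coeff_sum coeff_monom eq_commute)
  also have "\<dots> = (\<Sum>X\<in>{X \<in> ?L. vec.dim X = CARD('n) - 1}. mobius ?L X)"
    by (simp add: sum.inter_filter)
  also have "\<dots> = (\<Sum>H\<in>A. mobius ?L H)"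
    unfolding codim_one_flats_eq_arrangement[OF assms] ..
  also have "\<dots> = (\<Sum>H\<in>A. -1)"
    using mobius_hyperplane[OF assms] by simp
  finally show ?thesis by simp
qed

section \<open>Counting linearly independent families\<close>

(* A vector of 'a ^ m is encoded as an extensional function on {..<m}, and x is an
   I-indexed family of such vectors; the condition says that the family is linearly independent. *)
definition independent_families :: "nat \<Rightarrow> 'i set \<Rightarrow> ('i \<Rightarrow> nat \<Rightarrow> 'a::field) set" where
  "independent_families m I = {x \<in> I \<rightarrow>\<^sub>E ({..<m} \<rightarrow>\<^sub>E UNIV).
     \<forall>\<alpha>. (\<exists>i\<in>I. \<alpha> i \<noteq> 0) \<longrightarrow> (\<exists>j<m. (\<Sum>i\<in>I. \<alpha> i * x i j) \<noteq> 0)}"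

definition family_span :: "nat \<Rightarrow> 'i set \<Rightarrow> ('i \<Rightarrow> nat \<Rightarrow> 'a::field) \<Rightarrow> (nat \<Rightarrow> 'a) set" where
  "family_span m I x = (\<lambda>\<beta>. restrict (\<lambda>j. \<Sum>i\<in>I. \<beta> i * x i j) {..<m}) ` (I \<rightarrow>\<^sub>E UNIV)"

lemma independent_familiesD:
  assumes "x \<in> independent_families m I"
  shows "x \<in> I \<rightarrow>\<^sub>E ({..<m} \<rightarrow>\<^sub>E UNIV)"
    and "\<exists>i\<in>I. \<alpha> i \<noteq> 0 \<Longrightarrow> \<exists>j<m. (\<Sum>i\<in>I. \<alpha> i * x i j) \<noteq> 0"
  using assms unfolding independent_families_def by blast+

lemma family_span_subset: "family_span m I x \<subseteq> {..<m} \<rightarrow>\<^sub>E UNIV"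
  unfolding family_span_def by (rule image_subsetI) (simp only: restrict_PiE_iff, simp)

lemma card_family_span:
  fixes x :: "'i \<Rightarrow> nat \<Rightarrow> 'a::{finite,field}"
  assumes "finite I" "x \<in> independent_families m I"
  shows "card (family_span m I x) = CARD('a) ^ card I"
proof -
  have "inj_on (\<lambda>\<beta>. restrict (\<lambda>j. \<Sum>i\<in>I. \<beta> i * x i j) {..<m}) (I \<rightarrow>\<^sub>E UNIV)"
  proof (rule inj_onI)
    fix \<beta> \<gamma> assume \<beta>: "\<beta> \<in> I \<rightarrow>\<^sub>E UNIV" and \<gamma>: "\<gamma> \<in> I \<rightarrow>\<^sub>E UNIV"
      and eq: "restrict (\<lambda>j. \<Sum>i\<in>I. \<beta> i * x i j) {..<m} = restrict (\<lambda>j. \<Sum>i\<in>I. \<gamma> i * x i j) {..<m}"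
    have "(\<Sum>i\<in>I. (\<beta> i - \<gamma> i) * x i j) = 0" if "j < m" for j
      using fun_cong[OF eq, of j] that by (simp add: left_diff_distrib sum_subtractf)
    then have "\<forall>i\<in>I. \<beta> i - \<gamma> i = 0"
      using independent_familiesD(2)[OF assms(2), of "\<lambda>i. \<beta> i - \<gamma> i"] by blast
    then show "\<beta> = \<gamma>" using \<beta> \<gamma> by (intro PiE_ext) auto
  qed
  then have "card (family_span m I x) = card (I \<rightarrow>\<^sub>E (UNIV :: 'a set))"
    unfolding family_span_def by (rule card_image)
  also have "\<dots> = CARD('a) ^ card I" using assms(1) by (simp add: card_PiE)
  finally show ?thesis .
qed

lemma sum_fun_upd_insert:
  fixes x :: "'i \<Rightarrow> nat \<Rightarrow> 'a::field"
  assumes "i0 \<notin> I" "finite I"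
  shows "(\<Sum>i\<in>insert i0 I. (\<alpha>(i0 := c)) i * (x(i0 := y)) i j) = c * y j + (\<Sum>i\<in>I. \<alpha> i * x i j)"
proof -
  have "(\<Sum>i\<in>I. (\<alpha>(i0 := c)) i * (x(i0 := y)) i j) = (\<Sum>i\<in>I. \<alpha> i * x i j)"
    using assms(1) by (intro sum.cong) auto
  then show ?thesis using assms by simp
qed

lemma independent_families_fun_updD:
  fixes x :: "'i \<Rightarrow> nat \<Rightarrow> 'a::field"
  assumes "i0 \<notin> I" "finite I" "x \<in> I \<rightarrow>\<^sub>E ({..<m} \<rightarrow>\<^sub>E UNIV)"
    and indep: "x(i0 := y) \<in> independent_families m (insert i0 I)"
  shows "x \<in> independent_families m I" "y \<notin> family_span m I x"
proof -
  have nonzero: "\<exists>j<m. c * y j + (\<Sum>i\<in>I. \<alpha> i * x i j) \<noteq> 0" if "c \<noteq> 0 \<or> (\<exists>i\<in>I. \<alpha> i \<noteq> 0)" for \<alpha> c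
  proof -
    have "\<exists>i\<in>insert i0 I. (\<alpha>(i0 := c)) i \<noteq> 0" using that assms(1) by auto
    then have "\<exists>j<m. (\<Sum>i\<in>insert i0 I. (\<alpha>(i0 := c)) i * (x(i0 := y)) i j) \<noteq> 0"
      by (rule independent_familiesD(2)[OF indep])
    then show ?thesis by (simp only: sum_fun_upd_insert[OF assms(1,2)])
  qed
  show "x \<in> independent_families m I"
    unfolding independent_families_def using assms(3) nonzero[where c = 0] by auto
  show "y \<notin> family_span m I x"
  proof
    assume "y \<in> family_span m I x"
    then obtain \<beta> where "y = restrict (\<lambda>j. \<Sum>i\<in>I. \<beta> i * x i j) {..<m}"
      unfolding family_span_def by blast
    then show False using nonzero[where c = "-1" and \<alpha> = \<beta>] by auto
  qed
qed

lemma mem_family_span_if_combination_vanishes: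
  fixes x :: "'i \<Rightarrow> nat \<Rightarrow> 'a::field"
  assumes "y \<in> {..<m} \<rightarrow>\<^sub>E UNIV" "c \<noteq> 0"
    and vanish: "\<And>j. j < m \<Longrightarrow> c * y j + (\<Sum>i\<in>I. \<alpha> i * x i j) = 0"
  shows "y \<in> family_span m I x"
proof -
  define \<beta> where "\<beta> = restrict (\<lambda>i. - \<alpha> i / c) I"
  have "y j = (\<Sum>i\<in>I. \<beta> i * x i j)" if "j < m" for j
  proof -
    have "c * y j = - (\<Sum>i\<in>I. \<alpha> i * x i j)"
      using vanish[OF that] by (simp add: eq_neg_iff_add_eq_0)
    then have "y j = - (\<Sum>i\<in>I. \<alpha> i * x i j) / c"
      using assms(2) by (simp add: field_simps)
    also have "\<dots> = (\<Sum>i\<in>I. - \<alpha> i / c * x i j)"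
      by (simp add: sum_divide_distrib sum_negf)
    also have "\<dots> = (\<Sum>i\<in>I. \<beta> i * x i j)" unfolding \<beta>_def by (rule sum.cong) simp_all
    finally show ?thesis .
  qed
  then have "y = restrict (\<lambda>j. \<Sum>i\<in>I. \<beta> i * x i j) {..<m}"
    using assms(1) by (intro ext) (auto simp: PiE_def extensional_def)
  then show ?thesis
    unfolding family_span_def by (rule image_eqI[where x = \<beta>]) (simp_all add: \<beta>_def)
qed

lemma fun_upd_mem_independent_families:
  fixes x :: "'i \<Rightarrow> nat \<Rightarrow> 'a::field"
  assumes "i0 \<notin> I" "finite I" "x \<in> independent_families m I"
    and y: "y \<in> {..<m} \<rightarrow>\<^sub>E UNIV" "y \<notin> family_span m I x"
  shows "x(i0 := y) \<in> independent_families m (insert i0 I)"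
  unfolding independent_families_def
proof (intro CollectI conjI allI impI)
  show "x(i0 := y) \<in> insert i0 I \<rightarrow>\<^sub>E ({..<m} \<rightarrow>\<^sub>E UNIV)"
    by (rule PiE_fun_upd[OF y(1) independent_familiesD(1)[OF assms(3)]])
next
  fix \<alpha> :: "'i \<Rightarrow> 'a" assume nonzero: "\<exists>i\<in>insert i0 I. \<alpha> i \<noteq> 0"
  have sum_eq: "(\<Sum>i\<in>insert i0 I. \<alpha> i * (x(i0 := y)) i j) = \<alpha> i0 * y j + (\<Sum>i\<in>I. \<alpha> i * x i j)"
    for j
    using sum_fun_upd_insert[OF assms(1,2), of \<alpha> "\<alpha> i0"] by simp
  show "\<exists>j<m. (\<Sum>i\<in>insert i0 I. \<alpha> i * (x(i0 := y)) i j) \<noteq> 0"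
  proof (cases "\<alpha> i0 = 0")
    case True
    then have "\<exists>i\<in>I. \<alpha> i \<noteq> 0" using nonzero by auto
    then obtain j where "j < m" "(\<Sum>i\<in>I. \<alpha> i * x i j) \<noteq> 0"
      using independent_familiesD(2)[OF assms(3)] by blast
    then show ?thesis using True sum_eq by auto
  next
    case False
    show ?thesis
    proof (rule ccontr)
      assume "\<not> ?thesis"
      then have "y \<in> family_span m I x"
        using mem_family_span_if_combination_vanishes[OF y(1) False] sum_eq by auto
      with y(2) show False ..
    qed
  qed
qed

lemma independent_families_insert:
  fixes I :: "'i set"
  assumes "i0 \<notin> I" "finite I"
  shows "independent_families m (insert i0 I) =
    (\<lambda>(x, y). x(i0 := y)) ` (SIGMA x : independent_families m I. ({..<m} \<rightarrow>\<^sub>E UNIV) - family_span m I x)"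
    (is "_ = ?f ` ?S")
proof (intro equalityI subsetI)
  fix z :: "'i \<Rightarrow> nat \<Rightarrow> 'a" assume z: "z \<in> independent_families m (insert i0 I)"
  note z_PiE = independent_familiesD(1)[OF z]
  have "restrict z I \<in> I \<rightarrow>\<^sub>E ({..<m} \<rightarrow>\<^sub>E UNIV)" using z_PiE by auto
  moreover have z_eq: "z = (restrict z I)(i0 := z i0)"
    using z_PiE by (intro ext) (auto simp: PiE_def extensional_def)
  ultimately have "restrict z I \<in> independent_families m I" "z i0 \<notin> family_span m I (restrict z I)"
    using independent_families_fun_updD[OF assms] z by metis+
  moreover have "z i0 \<in> {..<m} \<rightarrow>\<^sub>E UNIV" using z_PiE by auto
  ultimately have "(restrict z I, z i0) \<in> ?S" by simp
  moreover have "z = ?f (restrict z I, z i0)" by (simp only: prod.case) (rule z_eq)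
  ultimately show "z \<in> ?f ` ?S" by (rule rev_image_eqI)
next
  fix z :: "'i \<Rightarrow> nat \<Rightarrow> 'a" assume "z \<in> ?f ` ?S"
  then obtain p where "p \<in> ?S" "z = ?f p" by (rule imageE)
  moreover obtain x y where "p = (x, y)" by (meson surj_pair)
  ultimately show "z \<in> independent_families m (insert i0 I)"
    using fun_upd_mem_independent_families[OF assms] by auto
qed

lemma finite_independent_families:
  assumes "finite I"
  shows "finite (independent_families m I :: ('i \<Rightarrow> nat \<Rightarrow> 'a::{finite,field}) set)"
proof (rule finite_subset)
  show "independent_families m I \<subseteq> I \<rightarrow>\<^sub>E ({..<m} \<rightarrow>\<^sub>E (UNIV :: 'a set))"
    using independent_familiesD(1) by blast
  show "finite (I \<rightarrow>\<^sub>E ({..<m} \<rightarrow>\<^sub>E (UNIV :: 'a set)))"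
    using assms by (simp add: finite_PiE)
qed

lemma card_diff_family_span:
  fixes x :: "'i \<Rightarrow> nat \<Rightarrow> 'a::{finite,field}"
  assumes "finite I" "x \<in> independent_families m I"
  shows "card (({..<m} \<rightarrow>\<^sub>E UNIV) - family_span m I x) = CARD('a) ^ m - CARD('a) ^ card I"
proof -
  have "finite (family_span m I x)"
    by (rule finite_subset[OF family_span_subset]) (simp add: finite_PiE)
  then have "card (({..<m} \<rightarrow>\<^sub>E UNIV) - family_span m I x) =
      card ({..<m} \<rightarrow>\<^sub>E (UNIV :: 'a set)) - card (family_span m I x)"
    using family_span_subset by (rule card_Diff_subset)
  then show ?thesis using card_family_span[OF assms] by (simp add: card_PiE)
qed

lemma inj_on_fun_upd_PiE:
  assumes "i0 \<notin> I"
  shows "inj_on (\<lambda>(x, y). x(i0 := y)) ((I \<rightarrow>\<^sub>E K) \<times> UNIV)"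
proof (rule inj_onI, clarify)
  fix x y x' y' assume x: "x \<in> I \<rightarrow>\<^sub>E K" and x': "x' \<in> I \<rightarrow>\<^sub>E K" and upd: "x(i0 := y) = x'(i0 := y')"
  have "x i = x' i" for i
    using fun_cong[OF upd, of i] x x' assms by (auto split: if_split_asm simp: PiE_def extensional_def)
  then show "x = x' \<and> y = y'" using fun_cong[OF upd, of i0] by auto
qed

lemma card_independent_families:
  fixes I :: "'i set"
  assumes "finite I"
  shows "card (independent_families m I :: ('i \<Rightarrow> nat \<Rightarrow> 'a::{finite,field}) set) =
    (\<Prod>k<card I. CARD('a) ^ m - CARD('a) ^ k)"
  using assms
proof (induction I rule: finite_induct)
  case empty
  have "(independent_families m {} :: ('i \<Rightarrow> nat \<Rightarrow> 'a) set) = {\<lambda>_. undefined}"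
    unfolding independent_families_def by (simp add: PiE_empty_domain)
  then show ?case by simp
next
  case (insert i0 I)
  let ?F = "independent_families m I :: ('i \<Rightarrow> nat \<Rightarrow> 'a) set"
  let ?S = "SIGMA x : ?F. ({..<m} \<rightarrow>\<^sub>E UNIV) - family_span m I x"
  have "?S \<subseteq> (I \<rightarrow>\<^sub>E ({..<m} \<rightarrow>\<^sub>E UNIV)) \<times> UNIV"
    by (auto dest: independent_familiesD(1))
  then have "inj_on (\<lambda>(x, y). x(i0 := y)) ?S"
    by (rule inj_on_subset[OF inj_on_fun_upd_PiE[OF insert.hyps(2)]])
  then have "card (independent_families m (insert i0 I) :: ('i \<Rightarrow> nat \<Rightarrow> 'a) set) = card ?S"
    unfolding independent_families_insert[OF insert.hyps(2,1)] by (rule card_image)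
  also have "\<dots> = (\<Sum>x\<in>?F. card (({..<m} \<rightarrow>\<^sub>E UNIV) - family_span m I x))"
    using finite_independent_families[OF insert.hyps(1)]
    by (intro card_SigmaI) (simp_all add: finite_PiE)
  also have "\<dots> = (\<Sum>x\<in>?F. CARD('a) ^ m - CARD('a) ^ card I)"
    by (rule sum.cong[OF refl card_diff_family_span[OF insert.hyps(1)]])
  also have "\<dots> = (\<Prod>k<card (insert i0 I). CARD('a) ^ m - CARD('a) ^ k)"
    using insert by simp
  finally show ?case .
qed

(* The i-th row of the matrix with columns r 0, ..., r (m - 1). *)
definition tuple_rows :: "nat \<Rightarrow> (nat \<Rightarrow> 'a ^ 'n) \<Rightarrow> 'n \<Rightarrow> nat \<Rightarrow> 'a" where
  "tuple_rows m r = (\<lambda>i. restrict (\<lambda>j. r j $ i) {..<m})"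

lemma tuple_rows_mem_independent_families_iff:
  fixes r :: "nat \<Rightarrow> 'a::field ^ 'n"
  shows "tuple_rows m r \<in> independent_families m UNIV \<longleftrightarrow> vec.span (r ` {..<m}) = UNIV"
  unfolding span_eq_UNIV_iff_no_annihilator independent_families_def
  by (simp add: tuple_rows_def PiE_iff Bex_def lessThan_iff cong: conj_cong)

lemma bij_betw_tuple_rows:
  "bij_betw (tuple_rows m) {r \<in> {..<m} \<rightarrow>\<^sub>E UNIV. vec.span (r ` {..<m}) = (UNIV :: ('a::field ^ 'n) set)}
    (independent_families m UNIV)"
  (is "bij_betw _ ?T ?F")
proof -
  define cols where "cols x = restrict (\<lambda>j. \<chi> i. x i j) {..<m}" for x :: "'n \<Rightarrow> nat \<Rightarrow> 'a"
  have rows_cols: "tuple_rows m (cols x) = x" if "x \<in> UNIV \<rightarrow>\<^sub>E ({..<m} \<rightarrow>\<^sub>E UNIV)" for x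
  proof (intro ext)
    fix i j
    have xi: "x i \<in> {..<m} \<rightarrow>\<^sub>E UNIV" by (rule PiE_mem[OF that UNIV_I])
    show "tuple_rows m (cols x) i j = x i j"
      by (cases "j < m") (simp_all add: cols_def tuple_rows_def PiE_arb[OF xi])
  qed
  show ?thesis
  proof (rule bij_betw_byWitness[where f' = cols])
    show "\<forall>r\<in>?T. cols (tuple_rows m r) = r"
    proof (intro ballI ext)
      fix r j assume "r \<in> ?T"
      then have r: "r \<in> {..<m} \<rightarrow>\<^sub>E UNIV" by simp
      show "cols (tuple_rows m r) j = r j"
        by (cases "j < m") (simp_all add: cols_def tuple_rows_def PiE_arb[OF r])
    qed
    show "\<forall>x\<in>?F. tuple_rows m (cols x) = x"
      using rows_cols[OF independent_familiesD(1)] by blast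
    show "tuple_rows m ` ?T \<subseteq> ?F"
    proof (rule image_subsetI)
      fix r assume "r \<in> ?T"
      then show "tuple_rows m r \<in> ?F" unfolding tuple_rows_mem_independent_families_iff by simp
    qed
    show "cols ` ?F \<subseteq> ?T"
    proof (rule image_subsetI)
      fix x assume "x \<in> ?F"
      then have "tuple_rows m (cols x) \<in> ?F" using rows_cols[OF independent_familiesD(1)] by simp
      then show "cols x \<in> ?T" unfolding tuple_rows_mem_independent_families_iff by (simp add: cols_def)
    qed
  qed
qed

lemma card_spanning_tuples:
  "card {r \<in> {..<m} \<rightarrow>\<^sub>E UNIV. vec.span (r ` {..<m}) = (UNIV :: ('a::{finite,field} ^ 'n) set)} =
    (\<Prod>k<CARD('n). CARD('a) ^ m - CARD('a) ^ k)"
proof -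
  have "card (independent_families m UNIV :: ('n \<Rightarrow> nat \<Rightarrow> 'a) set) =
      (\<Prod>k<CARD('n). CARD('a) ^ m - CARD('a) ^ k)"
    by (rule card_independent_families) simp
  with bij_betw_same_card[OF bij_betw_tuple_rows[where 'a = 'a and 'n = 'n]] show ?thesis
    by simp
qed

section \<open>The arrangement of all hyperplanes\<close>

lemma arrangement_subset_A_all: "arrangement A \<Longrightarrow> A \<subseteq> A_all"
  unfolding arrangement_def A_all_def by blast

lemma arrangement_A_all: "arrangement (A_all :: ('a::{finite,field} ^ 'n) set set)"
  unfolding arrangement_def A_all_def by simp

lemma uncovered_tuples_A_all:
  "uncovered_tuples (A_all :: ('a::field ^ 'n) set set) m =
    {r \<in> {..<m} \<rightarrow>\<^sub>E UNIV. vec.span (r ` {..<m}) = UNIV}"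
  unfolding uncovered_tuples_def A_all_def span_eq_UNIV_iff_not_subset_hyperplane
  by (simp add: image_subset_iff Bex_def lessThan_iff)

lemma char_poly_A_all:
  "char_poly (A_all :: ('a::{finite,field} ^ 'n) set set) =
    (\<Prod>i<CARD('n). [:- (int CARD('a) ^ i), 1:])"
  (is "char_poly ?A = ?P")
proof (rule poly_eqI_infinite)
  let ?q = "int CARD('a)"
  have "1 < ?q" using card_field_ge_2[where 'a = 'a] by simp
  then have "inj_on (\<lambda>m. ?q ^ m) {CARD('n)..}" by (intro inj_onI) (simp add: power_inject_exp)
  then show "infinite ((\<lambda>m. ?q ^ m) ` {CARD('n)..})"
    using finite_imageD infinite_Ici by blast
next
  fix x assume "x \<in> (\<lambda>m. int CARD('a) ^ m) ` {CARD('n)..}"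
  then obtain m where m: "CARD('n) \<le> m" "x = int CARD('a) ^ m" by blast
  have "poly (char_poly ?A) x = int (\<Prod>k<CARD('n). CARD('a) ^ m - CARD('a) ^ k)"
    by (simp add: m(2) poly_char_poly_arrangement[OF arrangement_A_all] uncovered_tuples_A_all
        card_spanning_tuples)
  also have "\<dots> = (\<Prod>k<CARD('n). int CARD('a) ^ m - int CARD('a) ^ k)"
    using m(1) card_field_ge_2[where 'a = 'a]
    by (simp add: of_nat_prod of_nat_diff power_increasing)
  also have "\<dots> = poly ?P x"
    by (simp add: m(2) poly_prod)
  finally show "poly (char_poly ?A) x = poly ?P x" .
qed

lemma sum_power_eq_div:
  fixes q :: nat
  assumes "1 < q"
  shows "(\<Sum>i<l. q ^ i) = (q ^ l - 1) div (q - 1)"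
proof -
  have "int (q ^ l - 1) = int ((q - 1) * (\<Sum>i<l. q ^ i))"
    using assms power_diff_1_eq[of "int q" l] by (simp add: of_nat_diff)
  then have "q ^ l - 1 = (q - 1) * (\<Sum>i<l. q ^ i)" by (simp only: of_nat_eq_iff)
  then show ?thesis using assms by simp
qed

lemma card_A_all:
  "card (A_all :: ('a::{finite,field} ^ 'n) set set) = (CARD('a) ^ CARD('n) - 1) div (CARD('a) - 1)"
  (is "card ?A = _")
proof -
  obtain n where n: "CARD('n) = Suc n" using zero_less_card_finite gr0_implies_Suc by blast
  have "coeff (char_poly ?A) (CARD('n) - 1) = - int (card ?A)"
    by (rule coeff_char_poly_codim_one[OF arrangement_A_all])
  then have "- int (card ?A) = coeff (char_poly ?A) n" using n by simp
  also have "\<dots> = - int (\<Sum>i<CARD('n). CARD('a) ^ i)"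
    unfolding char_poly_A_all n coeff_prod_linear_factors by simp
  finally show ?thesis using sum_power_eq_div card_field_ge_2[where 'a = 'a] by simp
qed

lemma uncovered_tuples_nonempty_if_missing_hyperplane:
  fixes A :: "('a::field ^ 'n) set set"
  assumes "arrangement A" "hyperplane H0" "H0 \<notin> A"
  shows "uncovered_tuples A (CARD('n) - 1) \<noteq> {}"
proof -
  let ?l = "CARD('n) - 1"
  obtain B where B: "B \<subseteq> H0" "vec.independent B" "H0 \<subseteq> vec.span B" "card B = vec.dim H0"
    using vec.basis_exists by blast
  have "card B = ?l" using B(4) assms(2) by (simp add: hyperplane_def)
  moreover have "finite B" using B(2) vec.finiteI_independent by blast
  ultimately obtain e where e: "bij_betw e {..<?l} B"
    using ex_bij_betw_nat_finite[of B] by (auto simp: atLeast0LessThan)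
  have "restrict e {..<?l} \<in> uncovered_tuples A ?l"
    unfolding uncovered_tuples_def
  proof (intro CollectI conjI ballI)
    show "restrict e {..<?l} \<in> {..<?l} \<rightarrow>\<^sub>E UNIV" by simp
  next
    fix H assume H: "H \<in> A"
    then have "hyperplane H" using assms(1) unfolding arrangement_def by blast
    show "\<exists>j<?l. restrict e {..<?l} j \<notin> H"
    proof (rule ccontr)
      assume "\<not> ?thesis"
      then have "B \<subseteq> H" using e by (auto simp: bij_betw_def)
      then have "H0 \<subseteq> H"
        using B(3) vec.span_minimal[of B H] \<open>hyperplane H\<close> by (auto simp: hyperplane_def)
      then have "H0 = H"
        using vec.subspace_dim_equal[of H0 H] assms(2) \<open>hyperplane H\<close> by (simp add: hyperplane_def)
      then show False using H assms(3) by blast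
    qed
  qed
  then show ?thesis by blast
qed

lemma poly_char_poly_ne_zero_if_ne_A_all:
  fixes A :: "('a::{finite,field} ^ 'n) set set"
  assumes "arrangement A" "A \<noteq> A_all"
  shows "poly (char_poly A) (int CARD('a) ^ (CARD('n) - 1)) \<noteq> 0"
proof -
  obtain H0 where "H0 \<in> A_all" "H0 \<notin> A" using assms arrangement_subset_A_all by blast
  then have "uncovered_tuples A (CARD('n) - 1) \<noteq> {}"
    using uncovered_tuples_nonempty_if_missing_hyperplane[OF assms(1)] by (simp add: A_all_def)
  then show ?thesis
    using poly_char_poly_arrangement[OF assms(1)] finite_uncovered_tuples
    by (simp add: card_gt_0_iff)
qed

theorem mainTheorem3:
  fixes A :: "('a::{finite,field} ^ 'n) set set"
  assumes "arrangement A"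
  defines "q \<equiv> CARD('a)" and "l \<equiv> CARD('n)"
  shows "(A = A_all \<longleftrightarrow> card A = (q ^ l - 1) div (q - 1))
       \<and> (card A = (q ^ l - 1) div (q - 1) \<longleftrightarrow> char_poly A = (\<Prod>i<l. [:- (int q ^ i), 1:]))
       \<and> (char_poly A = (\<Prod>i<l. [:- (int q ^ i), 1:]) \<longleftrightarrow> poly (char_poly A) (int q ^ (l - 1)) = 0)"
proof -
  have a_iff_b: "A = A_all \<longleftrightarrow> card A = (q ^ l - 1) div (q - 1)"
    using card_subset_eq[OF finite arrangement_subset_A_all[OF assms(1)]] card_A_all
    unfolding q_def l_def by auto
  have a_imp_c: "char_poly A = (\<Prod>i<l. [:- (int q ^ i), 1:])" if "A = A_all"
    using that char_poly_A_all unfolding q_def l_def by simp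
  have c_imp_d: "poly (char_poly A) (int q ^ (l - 1)) = 0"
    if "char_poly A = (\<Prod>i<l. [:- (int q ^ i), 1:])"
    using that poly_prod_linear_factors_root[of "l - 1" l "\<lambda>i. int q ^ i"]
    unfolding l_def by simp
  have d_imp_a: "A = A_all" if "poly (char_poly A) (int q ^ (l - 1)) = 0"
    using that poly_char_poly_ne_zero_if_ne_A_all[OF assms(1)] unfolding q_def l_def by blast
  show ?thesis using a_iff_b a_imp_c c_imp_d d_imp_a by blast
qed

end
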